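(* Assume that $\tilde Y$ is conditionally independent of $X$ given $Y$, and that all classes have positive probability under both $Y$ and $\tilde Y$. Fix any prediction function $\mathcal C$ and let $\hat C(X_{n+1})$ be produced by the standard marginal conformal method applied to the contaminated data $\mathcal D$. Suppose that, almost surely, for all $t\in\mathbb R$ and $k\in[K]$, $$\max_{l\ne k}F^l_k(t)\le F^k_k(t),$$ where $F^l_k(t)=\mathbb P[\hat s(X,l)\le t\mid Y=k,\mathcal D^{\mathrm{train}}]$. Then $\Delta(\hat\tau)\ge0$ almost surely, and hence $\mathbb P[Y_{n+1}\in\hat C(X_{n+1})]\ge1-\alpha$.
   Context: Let $K\ge 2$, $d\ge 1$, $n\ge 2$ be integers and $[m]=\{1,\dots,m\}$. Let $(X_i,Y_i,\tilde Y_i)$, $i\in[n+1]$, be i.i.d. copies of a random triple $(X,Y,\tilde Y)$ with $X\in\mathbb R^d$, true (unobserved) label $Y\in[K]$ and observed, possibly contaminated, label $\tilde Y\in[K]$. The observed data are $\mathcal D=\{(X_i,\tilde Y_i)\}_{i\in[n]}$; $X_{n+1}$ is a test feature vector with unknown label $Y_{n+1}$. The index set $[n]$ is split, independently of all data, into disjoint nonempty sets $\mathcal D^{\mathrm{train}}$ and $\mathcal D^{\mathrm{cal}}$ (a fixed split; $n_{\mathrm{cal}}=|\mathcal D^{\mathrm{cal}}|$), and a classifier $\hat\pi$ is fitted using only the observations indexed by $\mathcal D^{\mathrm{train}}$. A prediction function is a map $\mathcal C$ (which may depend on $\hat\pi$) assigning to each $x\in\mathbb R^d$ and $\tau=(\tau_1,\dots,\tau_K)\in[0,1]^K$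 a set $\mathcal C(x,\tau)\subseteq[K]$ such that: $\mathcal C(x,\tau)$ is nondecreasing (for inclusion) in each coordinate of $\tau$; whether $k\in\mathcal C(x,\tau)$ depends on $\tau$ only through $\tau_k$; and $k\in\mathcal C(x,\tau)$ whenever $\tau_k=1$. The associated conformity score is $\hat s(x,k)=\inf\{\tau_k\in[0,1]: k\in\mathcal C(x,\tau)\}$, and it is understood that $k\in\mathcal C(x,\tau)$ if and only if $\hat s(x,k)\le\tau_k$. Let $\alpha\in(0,1)$. Probabilities and expectations are over all data (not conditioned on class counts). Let $F(t)=\mathbb P[\hat s(X,Y)\le t\mid\mathcal D^{\mathrm{train}}]$ and $\tilde F(t)=\mathbb P[\hat s(X,\tilde Y)\le t\mid\mathcal D^{\mathrm{train}}]$ for a fresh independent copy $(X,Y,\tilde Y)$, and the marginal coverage inflation factor $\Delta(t)=F(t)-\tilde F(t)$. Standard marginal conformal method: $\hat\tau$ is the $\lceil(1+n_{\mathrm{cal}})(1-\alpha)\rceil$-th smallest value in $\{\hat s(X_i,\tilde Y_i):i\in\mathcal D^{\mathrm{cal}}\}$ (with $\hat\tau=1$ if this index exceeds $n_{\mathrm{cal}}$), and $\hat C(X_{n+1})=\mathcal C(X_{n+1},(\hat\tau,\dots,\hat\tau))$. *)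

theory Defs
  imports "HOL-Probability.Probability" "HOL-Library.Multiset"
begin

text \<open>Threshold vectors tau in [0,1]^K, represented as functions nat => real
  (only the coordinates 1..K are constrained).\<close>
definition tau_cube :: "nat \<Rightarrow> (nat \<Rightarrow> real) set" where
  "tau_cube K = {\<tau>. \<forall>i\<in>{1..K}. \<tau> i \<in> {0..1}}"

definition score :: "nat \<Rightarrow> ('x \<Rightarrow> (nat \<Rightarrow> real) \<Rightarrow> nat set) \<Rightarrow> 'x \<Rightarrow> nat \<Rightarrow> real" where
  "score K C x k = Inf {\<tau> k | \<tau>. \<tau> \<in> tau_cube K \<and> k \<in> C x \<tau>}"

definition prediction_function :: "nat \<Rightarrow> ('x \<Rightarrow> (nat \<Rightarrow> real) \<Rightarrow> nat set) \<Rightarrow> bool" where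
  "prediction_function K C \<longleftrightarrow>
     (\<forall>x. \<forall>\<tau>\<in>tau_cube K. C x \<tau> \<subseteq> {1..K})
   \<and> (\<forall>x. \<forall>\<tau>\<in>tau_cube K. \<forall>\<tau>'\<in>tau_cube K.
         (\<forall>i\<in>{1..K}. \<tau> i \<le> \<tau>' i) \<longrightarrow> C x \<tau> \<subseteq> C x \<tau>')
   \<and> (\<forall>x. \<forall>k\<in>{1..K}. \<forall>\<tau>\<in>tau_cube K. \<forall>\<tau>'\<in>tau_cube K.
         \<tau> k = \<tau>' k \<longrightarrow> (k \<in> C x \<tau> \<longleftrightarrow> k \<in> C x \<tau>'))
   \<and> (\<forall>x. \<forall>k\<in>{1..K}. \<forall>\<tau>\<in>tau_cube K. \<tau> k = 1 \<longrightarrow> k \<in> C x \<tau>)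
   \<and> (\<forall>x. \<forall>k\<in>{1..K}. \<forall>\<tau>\<in>tau_cube K. k \<in> C x \<tau> \<longleftrightarrow> score K C x k \<le> \<tau> k)"

definition conf_threshold :: "real \<Rightarrow> real multiset \<Rightarrow> real" where
  "conf_threshold \<alpha> S =
     (let m = size S; j = nat \<lceil>(1 + real m) * (1 - \<alpha>)\<rceil>
      in if j > m then 1 else sorted_list_of_multiset S ! (j - 1))"

end

(* Since the fitted prediction function depends on the training data only, the noisy calibration
   scores and the noisy test score are exchangeable, so the conformal threshold covers the noisy test
   label with probability at least 1 - alpha.  For fixed training data the true label is covered at
   threshold t with probability F(t), the noisy one with probability F~(t).  As the noisy label is
   independent of the features given the true label k, F~(t) mixes the class-conditional functions
   F^j_k(t) with the weights P[Y = k, Y~ = j]; dominance bounds each F^j_k(t) by F^k_k(t), and summing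
   out j leaves F(t).  Hence Delta >= 0, and Fubini over the test point turns this pointwise comparison
   into coverage of the true label. *)

theory Submission
  imports Defs "HOL-Combinatorics.Transposition"
begin

section \<open>Order statistics and the conformal threshold\<close>

lemma le_nth_sorted_list_of_multiset_iff:
  fixes S :: "'a::linorder multiset"
  assumes "1 \<le> j" "j \<le> size S"
  shows "v \<le> sorted_list_of_multiset S ! (j - 1) \<longleftrightarrow> size (filter_mset (\<lambda>x. x < v) S) < j"
proof -
  define xs where "xs = sorted_list_of_multiset S"
  define below where "below = {i. i < length xs \<and> xs ! i < v}"
  have xs: "mset xs = S" "sorted xs" unfolding xs_def by auto
  have len: "length xs = size S" using xs(1) by (metis size_mset)
  have "size (filter_mset (\<lambda>x. x < v) S) = length (filter (\<lambda>x. x < v) xs)"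
    using xs(1) by (metis mset_filter size_mset)
  also have "\<dots> = card below" unfolding below_def by (rule length_filter_conv_card)
  finally have size_eq: "size (filter_mset (\<lambda>x. x < v) S) = card below" .
  show ?thesis
  proof (cases "xs ! (j - 1) < v")
    case True
    have "{..<j} \<subseteq> below"
    proof
      fix i assume "i \<in> {..<j}"
      then have "i \<le> j - 1" "j - 1 < length xs" using assms len by auto
      then have "xs ! i \<le> xs ! (j - 1)" using xs(2) sorted_nth_mono by blast
      then show "i \<in> below" using True \<open>i \<le> j - 1\<close> \<open>j - 1 < length xs\<close> unfolding below_def by auto
    qed
    then have "j \<le> card below"
      unfolding below_def
      by (metis card_lessThan card_mono finite_Collect_conjI finite_Collect_less_nat)
    then show ?thesis using True size_eq xs_def by auto
  next
    case False
    have "below \<subseteq> {..<j - 1}"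
    proof
      fix i assume i: "i \<in> below"
      show "i \<in> {..<j - 1}"
      proof (rule ccontr)
        assume "i \<notin> {..<j - 1}"
        then have "j - 1 \<le> i" "i < length xs" using i unfolding below_def by auto
        then have "xs ! (j - 1) \<le> xs ! i" using xs(2) sorted_nth_mono by blast
        then show False using False i unfolding below_def by auto
      qed
    qed
    then have "card below \<le> j - 1" by (metis card_lessThan card_mono finite_lessThan)
    then show ?thesis using False size_eq xs_def assms by auto
  qed
qed

text \<open>In any finite family at least \<open>j \<le> card J\<close> members have fewer than \<open>j\<close> members
  strictly below them: the non-members are bounded below by the smallest non-member,
  and everything strictly below it is a member.\<close>
lemma card_low_rank_ge:
  fixes V :: "'i \<Rightarrow> 'a::linorder"
  assumes "finite J" "j \<le> card J"
  shows "j \<le> card {i\<in>J. card {l\<in>J. V l < V i} < j}"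
proof (cases "J - {i\<in>J. card {l\<in>J. V l < V i} < j} = {}")
  case True
  then have "{i\<in>J. card {l\<in>J. V l < V i} < j} = J" by auto
  then show ?thesis using assms(2) by simp
next
  case False
  define B where "B = J - {i\<in>J. card {l\<in>J. V l < V i} < j}"
  have "finite B" using assms(1) B_def by auto
  then have "Min (V ` B) \<in> V ` B" using Min_in False B_def by blast
  then obtain i0 where i0: "i0 \<in> B" "V i0 = Min (V ` B)" by auto
  have min: "V i0 \<le> V i" if "i \<in> B" for i using i0 \<open>finite B\<close> that by simp
  have "{l\<in>J. V l < V i0} \<subseteq> {i\<in>J. card {l\<in>J. V l < V i} < j}"
    using min unfolding B_def by fastforce
  then have "card {l\<in>J. V l < V i0} \<le> card {i\<in>J. card {l\<in>J. V l < V i} < j}"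
    using assms(1) by (intro card_mono) auto
  moreover have "j \<le> card {l\<in>J. V l < V i0}" using i0(1) unfolding B_def by auto
  ultimately show ?thesis by linarith
qed

lemma conf_threshold_mem:
  assumes "\<alpha> < 1"
  shows "conf_threshold \<alpha> S \<in> insert 1 (set_mset S)"
proof -
  have "0 < (1 + real (size S)) * (1 - \<alpha>)" using assms by simp
  then have "1 \<le> nat \<lceil>(1 + real (size S)) * (1 - \<alpha>)\<rceil>" by linarith
  moreover have "length (sorted_list_of_multiset S) = size S"
    by (metis mset_sorted_list_of_multiset size_mset)
  ultimately have "sorted_list_of_multiset S ! (nat \<lceil>(1 + real (size S)) * (1 - \<alpha>)\<rceil> - 1)
      \<in> set (sorted_list_of_multiset S)"
    if "\<not> nat \<lceil>(1 + real (size S)) * (1 - \<alpha>)\<rceil> > size S"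
    using that by (intro nth_mem) linarith
  then show ?thesis
    unfolding conf_threshold_def Let_def by auto
qed

lemma le_conf_threshold_iff:
  assumes "\<alpha> < 1" "v \<le> 1"
  shows "v \<le> conf_threshold \<alpha> S \<longleftrightarrow>
           size (filter_mset (\<lambda>x. x < v) S) < nat \<lceil>(1 + real (size S)) * (1 - \<alpha>)\<rceil>"
proof -
  define j where "j = nat \<lceil>(1 + real (size S)) * (1 - \<alpha>)\<rceil>"
  have "0 < (1 + real (size S)) * (1 - \<alpha>)" using assms by simp
  then have "1 \<le> j" unfolding j_def by linarith
  then show ?thesis
    using le_nth_sorted_list_of_multiset_iff[of j S v] assms(2)
    unfolding conf_threshold_def Let_def j_def[symmetric]
    by (auto intro: le_less_trans[OF size_filter_mset_lesseq])
qed

lemma score_mem_unit_interval: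
  assumes "prediction_function K C" "k \<in> {1..K}"
  shows "score K C x k \<in> {0..1}"
proof -
  define S where "S = {\<tau> k | \<tau>. \<tau> \<in> tau_cube K \<and> k \<in> C x \<tau>}"
  have one: "(\<lambda>_. 1) \<in> tau_cube K" unfolding tau_cube_def by simp
  have "\<forall>x. \<forall>k\<in>{1..K}. \<forall>\<tau>\<in>tau_cube K. \<tau> k = 1 \<longrightarrow> k \<in> C x \<tau>"
    using assms(1) unfolding prediction_function_def by (elim conjE)
  from this[rule_format, OF assms(2) one] have "k \<in> C x (\<lambda>_. 1)" by simp
  with one have "1 \<in> S" unfolding S_def by (intro CollectI exI[of _ "\<lambda>_. 1"]) simp
  have bounds: "v \<in> {0..1}" if "v \<in> S" for v
  proof -
    obtain \<tau> where "v = \<tau> k" "\<tau> \<in> tau_cube K" using \<open>v \<in> S\<close> unfolding S_def by auto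
    then show ?thesis using assms(2) unfolding tau_cube_def by simp
  qed
  then have "bdd_below S" by (intro bdd_belowI[of _ 0]) auto
  with \<open>1 \<in> S\<close> have "Inf S \<le> 1" by (rule cInf_lower)
  moreover have "0 \<le> Inf S" using \<open>1 \<in> S\<close> bounds by (intro cInf_greatest) auto
  ultimately show ?thesis unfolding score_def S_def by simp
qed

lemma mem_prediction_function_const_iff:
  assumes "prediction_function K C" "k \<in> {1..K}" "t \<in> {0..1}"
  shows "k \<in> C x (\<lambda>_. t) \<longleftrightarrow> score K C x k \<le> t"
proof -
  have cube: "(\<lambda>_. t) \<in> tau_cube K" using assms(3) unfolding tau_cube_def by simp
  have "\<forall>x. \<forall>k\<in>{1..K}. \<forall>\<tau>\<in>tau_cube K. k \<in> C x \<tau> \<longleftrightarrow> score K C x k \<le> \<tau> k"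
    using assms(1) unfolding prediction_function_def by (elim conjE)
  from this[rule_format, OF assms(2) cube] show ?thesis by simp
qed

section \<open>Exchangeability of ranks in a product space\<close>

lemma measurable_card_less:
  fixes f :: "'i \<Rightarrow> 'a \<Rightarrow> real"
  assumes "finite A" "\<And>l. l \<in> A \<Longrightarrow> f l \<in> borel_measurable M" "h \<in> borel_measurable M"
  shows "{\<omega>\<in>space M. card {l\<in>A. f l \<omega> < h \<omega>} < j} \<in> sets M"
proof -
  define below where "below l = {\<omega>\<in>space M. f l \<omega> < h \<omega>}" for l
  have below: "below l \<in> sets M" if "l \<in> A" for l
    using assms(2)[OF that] assms(3) unfolding below_def by measurable
  have count: "card {l\<in>A. f l \<omega> < h \<omega>} < j \<longleftrightarrow> (\<Sum>l\<in>A. indicator (below l) \<omega>) < real j"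
    if "\<omega> \<in> space M" for \<omega>
  proof -
    have "(\<Sum>l\<in>A. indicator (below l) \<omega> :: real) = (\<Sum>l\<in>{l\<in>A. f l \<omega> < h \<omega>}. 1)"
      using assms(1) that by (simp add: below_def sum.If_cases indicator_def Int_def)
    then show ?thesis by simp
  qed
  have "(\<lambda>\<omega>. \<Sum>l\<in>A. indicator (below l) \<omega> :: real) \<in> borel_measurable M"
    using below by (intro borel_measurable_sum borel_measurable_indicator) auto
  then have "{\<omega>\<in>space M. (\<Sum>l\<in>A. indicator (below l) \<omega> :: real) < real j} \<in> sets M"
    by measurable
  also have "{\<omega>\<in>space M. (\<Sum>l\<in>A. indicator (below l) \<omega> :: real) < real j}
      = {\<omega>\<in>space M. card {l\<in>A. f l \<omega> < h \<omega>} < j}"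
    using count by auto
  finally show ?thesis .
qed

lemma rank_event_measure_transpose:
  fixes P :: "'a measure" and I :: "'i set" and V :: "'i \<Rightarrow> ('i \<Rightarrow> 'a) \<Rightarrow> real"
  defines "\<Omega> \<equiv> PiM I (\<lambda>_. P)"
  assumes "prob_space P" "J \<subseteq> I" "i \<in> J" "i' \<in> J" "finite J"
    and meas: "\<And>l. l \<in> J \<Longrightarrow> V l \<in> borel_measurable \<Omega>"
    and perm: "\<And>\<omega> l. \<omega> \<in> space \<Omega> \<Longrightarrow> l \<in> J \<Longrightarrow>
                 V l (\<lambda>k\<in>I. \<omega> (Transposition.transpose i i' k)) = V (Transposition.transpose i i' l) \<omega>"
  shows "measure \<Omega> {\<omega>\<in>space \<Omega>. card {l\<in>J. V l \<omega> < V i \<omega>} < j}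
       = measure \<Omega> {\<omega>\<in>space \<Omega>. card {l\<in>J. V l \<omega> < V i' \<omega>} < j}"
proof -
  define \<sigma> where "\<sigma> = Transposition.transpose i i'"
  define \<pi> where "\<pi> \<omega> = (\<lambda>k\<in>I. \<omega> (\<sigma> k))" for \<omega> :: "'i \<Rightarrow> 'a"
  define G where "G i = {\<omega>\<in>space \<Omega>. card {l\<in>J. V l \<omega> < V i \<omega>} < j}" for i
  have \<sigma>I: "\<sigma> k \<in> I" if "k \<in> I" for k
    using that assms(3-5) unfolding \<sigma>_def Transposition.transpose_def by auto
  have \<pi>: "\<pi> \<in> measurable \<Omega> \<Omega>"
    unfolding \<pi>_def \<Omega>_def by (intro measurable_restrict measurable_component_singleton \<sigma>I)
  have "distr \<Omega> (\<Pi>\<^sub>M k\<in>I. P) \<pi> = (\<Pi>\<^sub>M k\<in>I. P)"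
    unfolding \<Omega>_def \<pi>_def using assms(2) \<sigma>I by (intro distr_PiM_reindex) (auto simp: \<sigma>_def)
  then have distr: "distr \<Omega> \<Omega> \<pi> = \<Omega>" unfolding \<Omega>_def .
  have "card {l\<in>J. V l (\<pi> \<omega>) < V i' (\<pi> \<omega>)} = card {l\<in>J. V l \<omega> < V i \<omega>}"
    if "\<omega> \<in> space \<Omega>" for \<omega>
  proof -
    have "V l (\<pi> \<omega>) = V (\<sigma> l) \<omega>" if "l \<in> J" for l
      using perm[OF \<open>\<omega> \<in> space \<Omega>\<close> that] unfolding \<pi>_def \<sigma>_def .
    then have "{l\<in>J. V l (\<pi> \<omega>) < V i' (\<pi> \<omega>)} = {l\<in>J. V (\<sigma> l) \<omega> < V i \<omega>}"
      using assms(5) by (auto simp: \<sigma>_def)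
    also have "\<dots> = \<sigma> ` {l\<in>J. V l \<omega> < V i \<omega>}"
      using assms(4,5) by (auto simp: in_transpose_image_iff \<sigma>_def Transposition.transpose_def)
    finally show ?thesis by (simp add: card_image \<sigma>_def)
  qed
  then have "\<pi> -` G i' \<inter> space \<Omega> = G i"
    using measurable_space[OF \<pi>] unfolding G_def by auto
  moreover have "G i' \<in> sets \<Omega>"
    unfolding G_def using assms(5,6) meas by (intro measurable_card_less) auto
  ultimately have "measure \<Omega> (G i) = measure (distr \<Omega> \<Omega> \<pi>) (G i')"
    using measure_distr[OF \<pi>] by simp
  then show ?thesis unfolding distr G_def .
qed

lemma rank_event_measure_ge:
  fixes P :: "'a measure" and I :: "'i set" and V :: "'i \<Rightarrow> ('i \<Rightarrow> 'a) \<Rightarrow> real"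
  defines "\<Omega> \<equiv> PiM I (\<lambda>_. P)"
  assumes P: "prob_space P" and J: "J \<subseteq> I" "finite J" "i \<in> J" and j: "j \<le> card J"
    and meas: "\<And>l. l \<in> J \<Longrightarrow> V l \<in> borel_measurable \<Omega>"
    and perm: "\<And>i i' \<omega> l. i \<in> J \<Longrightarrow> i' \<in> J \<Longrightarrow> \<omega> \<in> space \<Omega> \<Longrightarrow> l \<in> J \<Longrightarrow>
                 V l (\<lambda>k\<in>I. \<omega> (Transposition.transpose i i' k)) = V (Transposition.transpose i i' l) \<omega>"
  shows "real j \<le> real (card J) * measure \<Omega> {\<omega>\<in>space \<Omega>. card {l\<in>J. V l \<omega> < V i \<omega>} < j}"
proof -
  define G where "G i = {\<omega>\<in>space \<Omega>. card {l\<in>J. V l \<omega> < V i \<omega>} < j}" for i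
  interpret \<Omega>: prob_space \<Omega> unfolding \<Omega>_def by (intro prob_space_PiM P)
  have G: "G i' \<in> sets \<Omega>" if "i' \<in> J" for i'
    unfolding G_def using J(2) meas that by (intro measurable_card_less) auto
  have measure_G: "measure \<Omega> (G i') = measure \<Omega> (G i)" if "i' \<in> J" for i'
    unfolding G_def \<Omega>_def
    by (rule rank_event_measure_transpose[OF P J(1) that J(3) J(2)])
       (use meas perm that J(3) in \<open>simp_all add: \<Omega>_def\<close>)
  have count: "real j \<le> (\<Sum>i'\<in>J. indicator (G i') \<omega>)" if "\<omega> \<in> space \<Omega>" for \<omega>
  proof -
    have "(\<Sum>i'\<in>J. indicator (G i') \<omega> :: real) = real (card {i'\<in>J. \<omega> \<in> G i'})"
      using J(2) by (simp add: indicator_def sum.If_cases Int_def)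
    also have "{i'\<in>J. \<omega> \<in> G i'} = {i'\<in>J. card {l\<in>J. V l \<omega> < V i' \<omega>} < j}"
      unfolding G_def using that by auto
    finally show ?thesis using card_low_rank_ge[OF J(2) j, of "\<lambda>l. V l \<omega>"] by simp
  qed
  have "real j \<le> (\<integral>\<omega>. (\<Sum>i'\<in>J. indicator (G i') \<omega>) \<partial>\<Omega>)"
    using count G by (intro \<Omega>.integral_ge_const integrable_sum integrable_real_indicator)
       (auto simp: less_top[symmetric])
  also have "\<dots> = (\<Sum>i'\<in>J. (\<integral>\<omega>. indicator (G i') \<omega> \<partial>\<Omega>))"
    using G by (intro Bochner_Integration.integral_sum integrable_real_indicator)
       (auto simp: less_top[symmetric])
  also have "\<dots> = (\<Sum>i'\<in>J. measure \<Omega> (G i'))"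
    using G by (intro sum.cong refl) (simp add: Int_absorb2 sets.sets_into_space)
  also have "\<dots> = real (card J) * measure \<Omega> (G i)"
    using measure_G by simp
  finally show ?thesis unfolding G_def .
qed

section \<open>Comparing measures through sections\<close>

lemma emeasure_section_eq_nn_integral:
  assumes "x \<in> space (PiM I M)" "i \<notin> I" "S \<in> sets (PiM (insert i I) M)"
  shows "(\<integral>\<^sup>+y. indicator S (x(i := y)) \<partial>M i) = emeasure (M i) {y\<in>space (M i). x(i := y) \<in> S}"
proof -
  have "(\<lambda>y. x(i := y)) -` S \<inter> space (M i) \<in> sets (M i)"
    using measurable_sets[OF measurable_component_update[OF assms(1,2)] assms(3)] .
  then have meas: "{y\<in>space (M i). x(i := y) \<in> S} \<in> sets (M i)"
    by (simp add: vimage_def Int_def conj_commute)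
  have "(\<integral>\<^sup>+y. indicator S (x(i := y)) \<partial>M i) = (\<integral>\<^sup>+y. indicator {y\<in>space (M i). x(i := y) \<in> S} y \<partial>M i)"
    by (intro nn_integral_cong) (simp add: indicator_def)
  also have "\<dots> = emeasure (M i) {y\<in>space (M i). x(i := y) \<in> S}"
    using meas by simp
  finally show ?thesis .
qed

text \<open>Almost every section of the exceptional null set of \<open>Q\<close> is null, so almost every section
  contains a point where \<open>Q\<close> holds.\<close>
lemma measure_le_of_AE_sections:
  fixes P :: "'a measure" and I :: "'i set" and a :: 'i
  defines "\<Omega> \<equiv> PiM (insert a I) (\<lambda>_. P)"
  assumes P: "prob_space P" and I: "finite I" "a \<notin> I"
    and AB: "A \<in> sets \<Omega>" "B \<in> sets \<Omega>"
    and Q: "AE \<omega> in \<Omega>. Q \<omega>"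
    and sections: "\<And>x y. x \<in> space (PiM I (\<lambda>_. P)) \<Longrightarrow> y \<in> space P \<Longrightarrow> Q (x(a := y)) \<Longrightarrow>
        emeasure P {y'\<in>space P. x(a := y') \<in> A} \<le> emeasure P {y'\<in>space P. x(a := y') \<in> B}"
  shows "measure \<Omega> A \<le> measure \<Omega> B"
proof -
  let ?O = "PiM I (\<lambda>_. P)"
  interpret P: prob_space P by (rule P)
  interpret \<Omega>: prob_space \<Omega> unfolding \<Omega>_def by (intro prob_space_PiM P)
  interpret product_sigma_finite "\<lambda>_. P"
    by (simp add: product_sigma_finite_def P.sigma_finite_measure)
  have fubini: "emeasure \<Omega> S = (\<integral>\<^sup>+x. emeasure P {y\<in>space P. x(a := y) \<in> S} \<partial>?O)"
    if "S \<in> sets \<Omega>" for S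
  proof -
    have "emeasure \<Omega> S = (\<integral>\<^sup>+x. (\<integral>\<^sup>+y. indicator S (x(a := y)) \<partial>P) \<partial>?O)"
      using that unfolding \<Omega>_def
      by (simp add: product_nn_integral_insert[OF I] flip: nn_integral_indicator)
    also have "\<dots> = (\<integral>\<^sup>+x. emeasure P {y\<in>space P. x(a := y) \<in> S} \<partial>?O)"
      using that I(2) unfolding \<Omega>_def
      by (intro nn_integral_cong) (rule emeasure_section_eq_nn_integral[where M="\<lambda>_. P"])
    finally show ?thesis .
  qed
  obtain N where N: "{\<omega>\<in>space \<Omega>. \<not> Q \<omega>} \<subseteq> N" "emeasure \<Omega> N = 0" "N \<in> sets \<Omega>"
    using Q by (rule AE_E)
  have "(\<lambda>x. emeasure P {y\<in>space P. x(a := y) \<in> N}) \<in> borel_measurable ?O"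
  proof -
    have "(\<lambda>x. \<integral>\<^sup>+y. indicator N (x(a := y)) \<partial>P) \<in> borel_measurable ?O"
      using N(3) unfolding \<Omega>_def by measurable
    moreover have "(\<integral>\<^sup>+y. indicator N (x(a := y)) \<partial>P) = emeasure P {y\<in>space P. x(a := y) \<in> N}"
      if "x \<in> space ?O" for x
      using that I(2) N(3) unfolding \<Omega>_def
      by (rule emeasure_section_eq_nn_integral[where M="\<lambda>_. P"])
    ultimately show ?thesis by (simp cong: measurable_cong)
  qed
  moreover have "(\<integral>\<^sup>+x. emeasure P {y\<in>space P. x(a := y) \<in> N} \<partial>?O) = 0"
    using fubini[OF N(3)] N(2) by simp
  ultimately have "AE x in ?O. emeasure P {y\<in>space P. x(a := y) \<in> N} = 0"
    by (simp add: nn_integral_0_iff_AE)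
  then have "AE x in ?O. emeasure P {y\<in>space P. x(a := y) \<in> A}
                         \<le> emeasure P {y\<in>space P. x(a := y) \<in> B}"
  proof (rule AE_mp[OF _ AE_I2], intro impI)
    fix x assume x: "x \<in> space ?O" and null: "emeasure P {y\<in>space P. x(a := y) \<in> N} = 0"
    have "{y\<in>space P. x(a := y) \<in> N} \<noteq> space P"
      using null P.emeasure_space_1 by auto
    then obtain y where y: "y \<in> space P" "x(a := y) \<notin> N" by blast
    have "x(a := y) \<in> space \<Omega>"
      using measurable_space[OF measurable_component_update[OF x I(2)] y(1)] unfolding \<Omega>_def .
    with N(1) y(2) have "Q (x(a := y))" by blast
    from sections[OF x y(1) this]
    show "emeasure P {y\<in>space P. x(a := y) \<in> A} \<le> emeasure P {y\<in>space P. x(a := y) \<in> B}" .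
  qed
  then have "emeasure \<Omega> A \<le> emeasure \<Omega> B"
    unfolding fubini[OF AB(1)] fubini[OF AB(2)] by (rule nn_integral_mono_AE)
  then show ?thesis by (simp add: \<Omega>.emeasure_eq_measure)
qed

section \<open>Score distributions under label noise\<close>

lemma (in finite_measure) measure_eq_sum_fibres:
  assumes "finite L" "A \<in> sets M" "f \<in> measurable M (count_space L)"
  shows "measure M A = (\<Sum>l\<in>L. measure M {z\<in>A. f z = l})"
proof -
  have "A = (\<Union>l\<in>L. {z\<in>A. f z = l})"
    using measurable_space[OF assms(3)] sets.sets_into_space[OF assms(2)] by auto
  then have "measure M A = measure M (\<Union>l\<in>L. {z\<in>A. f z = l})" by simp
  also have "\<dots> = (\<Sum>l\<in>L. measure M {z\<in>A. f z = l})"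
  proof (rule finite_measure_finite_Union)
    have "{z\<in>A. f z = l} = A \<inter> (f -` {l} \<inter> space M)" for l
      using sets.sets_into_space[OF assms(2)] by auto
    then show "(\<lambda>l. {z\<in>A. f z = l}) ` L \<subseteq> sets M"
      using assms(2,3) by auto
  qed (auto simp: assms(1) disjoint_family_on_def)
  finally show ?thesis .
qed

locale noisy_label_law = prob_space P
  for K :: nat and P :: "('x::topological_space \<times> nat \<times> nat) measure" +
  assumes sets_P: "sets P = sets (borel \<Otimes>\<^sub>M count_space {1..K} \<Otimes>\<^sub>M count_space {1..K})"
    and class_prob_pos: "\<forall>k\<in>{1..K}. measure P {z \<in> space P. fst (snd z) = k} > 0"
    and noisy_label_cond_indep: "\<forall>A\<in>sets (borel :: 'x measure). \<forall>j\<in>{1..K}. \<forall>k\<in>{1..K}.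
        measure P {z \<in> space P. fst z \<in> A \<and> snd (snd z) = j \<and> fst (snd z) = k}
          / measure P {z \<in> space P. fst (snd z) = k}
        = (measure P {z \<in> space P. fst z \<in> A \<and> fst (snd z) = k}
            / measure P {z \<in> space P. fst (snd z) = k})
        * (measure P {z \<in> space P. snd (snd z) = j \<and> fst (snd z) = k}
            / measure P {z \<in> space P. fst (snd z) = k})"
begin

lemma measurable_P_eq:
  "measurable P N = measurable (borel \<Otimes>\<^sub>M count_space {1..K} \<Otimes>\<^sub>M count_space {1..K}) N"
  by (rule measurable_cong_sets[OF sets_P refl])

lemma measurable_feature [measurable]: "fst \<in> measurable P borel"
  unfolding measurable_P_eq by measurable

lemma measurable_true_label [measurable]: "(\<lambda>z. fst (snd z)) \<in> measurable P (count_space {1..K})"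
  unfolding measurable_P_eq by measurable

lemma measurable_noisy_label [measurable]: "(\<lambda>z. snd (snd z)) \<in> measurable P (count_space {1..K})"
  unfolding measurable_P_eq by measurable

lemma borel_measurable_at_label:
  assumes "\<And>l. l \<in> {1..K} \<Longrightarrow> (\<lambda>x. g x l) \<in> borel_measurable borel"
    and "lab \<in> measurable P (count_space {1..K})"
  shows "(\<lambda>z. g (fst z) (lab z) :: real) \<in> borel_measurable P"
  by (rule measurable_compose_countable'[OF _ assms(2)])
     (auto intro: measurable_compose[OF measurable_feature assms(1)])

definition class_cdf :: "('x \<Rightarrow> nat \<Rightarrow> real) \<Rightarrow> nat \<Rightarrow> nat \<Rightarrow> real \<Rightarrow> real" where
  "class_cdf g l k t = measure P {z \<in> space P. fst (snd z) = k \<and> g (fst z) l \<le> t}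
                        / measure P {z \<in> space P. fst (snd z) = k}"

definition true_label_cdf :: "('x \<Rightarrow> nat \<Rightarrow> real) \<Rightarrow> real \<Rightarrow> real" where
  "true_label_cdf g t = measure P {z \<in> space P. g (fst z) (fst (snd z)) \<le> t}"

definition noisy_label_cdf :: "('x \<Rightarrow> nat \<Rightarrow> real) \<Rightarrow> real \<Rightarrow> real" where
  "noisy_label_cdf g t = measure P {z \<in> space P. g (fst z) (snd (snd z)) \<le> t}"

text \<open>By conditional independence,
  \<open>P[Y = k, Y~ = j, g X j \<le> t] = class_cdf g j k t * P[Y = k, Y~ = j]\<close>.\<close>
lemma noisy_label_cdf_le_true_label_cdf:
  assumes g: "\<And>l. l \<in> {1..K} \<Longrightarrow> (\<lambda>x. g x l) \<in> borel_measurable borel"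
    and dominance: "\<forall>k\<in>{1..K}. \<forall>l\<in>{1..K}. l \<noteq> k \<longrightarrow> class_cdf g l k t \<le> class_cdf g k k t"
  shows "noisy_label_cdf g t \<le> true_label_cdf g t"
proof -
  define p where "p k = measure P {z \<in> space P. fst (snd z) = k}" for k
  define q where "q j k = measure P {z \<in> space P. snd (snd z) = j \<and> fst (snd z) = k}" for j k
  define E where "E j k = {z \<in> space P. snd (snd z) = j \<and> fst (snd z) = k \<and> g (fst z) j \<le> t}" for j k
  have E: "measure P (E j k) = class_cdf g j k t * q j k" if jk: "j \<in> {1..K}" "k \<in> {1..K}" for j k
  proof -
    note [measurable] = g[OF jk(1)]
    have A: "{x. g x j \<le> t} \<in> sets borel" by measurable
    have "{z \<in> space P. fst z \<in> {x. g x j \<le> t} \<and> snd (snd z) = j \<and> fst (snd z) = k} = E j k"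
      unfolding E_def by auto
    moreover have "{z \<in> space P. fst z \<in> {x. g x j \<le> t} \<and> fst (snd z) = k}
        = {z \<in> space P. fst (snd z) = k \<and> g (fst z) j \<le> t}"
      by auto
    ultimately have "measure P (E j k) / p k = class_cdf g j k t * (q j k / p k)"
      using noisy_label_cond_indep[rule_format, OF A jk] unfolding class_cdf_def p_def q_def by simp
    moreover have "p k > 0" using class_prob_pos jk unfolding p_def by auto
    ultimately show ?thesis by (simp add: field_simps)
  qed
  have fibres_Y: "measure P A = (\<Sum>k\<in>{1..K}. measure P {z\<in>A. fst (snd z) = k})"
    if "A \<in> sets P" for A
    using measure_eq_sum_fibres[OF _ that measurable_true_label] by simp
  have fibres_noisy: "measure P A = (\<Sum>j\<in>{1..K}. measure P {z\<in>A. snd (snd z) = j})"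
    if "A \<in> sets P" for A
    using measure_eq_sum_fibres[OF _ that measurable_noisy_label] by simp
  have q: "(\<Sum>j\<in>{1..K}. q j k) = p k" for k
  proof -
    have "p k = (\<Sum>j\<in>{1..K}. measure P {z\<in>{z \<in> space P. fst (snd z) = k}. snd (snd z) = j})"
      unfolding p_def by (rule fibres_noisy) measurable
    also have "\<dots> = (\<Sum>j\<in>{1..K}. q j k)"
      unfolding q_def by (intro sum.cong refl arg_cong[where f="measure P"]) auto
    finally show ?thesis by simp
  qed
  have [measurable]: "(\<lambda>z. g (fst z) (snd (snd z))) \<in> borel_measurable P"
    using g measurable_noisy_label by (rule borel_measurable_at_label)
  have [measurable]: "(\<lambda>z. g (fst z) (fst (snd z))) \<in> borel_measurable P"
    using g measurable_true_label by (rule borel_measurable_at_label)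
  have "noisy_label_cdf g t
      = (\<Sum>k\<in>{1..K}. measure P {z \<in> space P. fst (snd z) = k \<and> g (fst z) (snd (snd z)) \<le> t})"
    unfolding noisy_label_cdf_def
    by (subst fibres_Y) (measurable, auto intro!: sum.cong arg_cong[where f="measure P"])
  also have "\<dots> = (\<Sum>k\<in>{1..K}. \<Sum>j\<in>{1..K}. measure P (E j k))"
  proof (intro sum.cong refl)
    fix k
    show "measure P {z \<in> space P. fst (snd z) = k \<and> g (fst z) (snd (snd z)) \<le> t}
        = (\<Sum>j\<in>{1..K}. measure P (E j k))"
      unfolding E_def
      by (subst fibres_noisy) (measurable, auto intro!: sum.cong arg_cong[where f="measure P"])
  qed
  also have "\<dots> = (\<Sum>k\<in>{1..K}. \<Sum>j\<in>{1..K}. class_cdf g j k t * q j k)"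
    by (simp add: E)
  also have "\<dots> \<le> (\<Sum>k\<in>{1..K}. \<Sum>j\<in>{1..K}. class_cdf g k k t * q j k)"
  proof (intro sum_mono mult_right_mono)
    fix k j assume "k \<in> {1..K}" "j \<in> {1..K}"
    then show "class_cdf g j k t \<le> class_cdf g k k t"
      using dominance by (cases "j = k") auto
  qed (simp add: q_def)
  also have "\<dots> = (\<Sum>k\<in>{1..K}. class_cdf g k k t * p k)"
    by (simp only: sum_distrib_left[symmetric] q)
  also have "\<dots> = (\<Sum>k\<in>{1..K}. measure P {z \<in> space P. fst (snd z) = k \<and> g (fst z) k \<le> t})"
  proof (intro sum.cong refl)
    fix k assume "k \<in> {1..K}"
    then have "p k > 0" using class_prob_pos unfolding p_def by blast
    then show "class_cdf g k k t * p k = measure P {z \<in> space P. fst (snd z) = k \<and> g (fst z) k \<le> t}"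
      unfolding class_cdf_def p_def by simp
  qed
  also have "\<dots> = true_label_cdf g t"
    unfolding true_label_cdf_def
    by (subst (2) fibres_Y) (measurable, auto intro!: sum.cong arg_cong[where f="measure P"])
  finally show ?thesis .
qed

end

section \<open>Split conformal prediction calibrated on noisy labels\<close>

locale split_conformal = noisy_label_law K P
  for K :: nat and P :: "('x::topological_space \<times> nat \<times> nat) measure" +
  fixes n :: nat and Dtrain Dcal :: "nat set" and \<alpha> :: real
    and C :: "(nat \<Rightarrow> 'x \<times> nat \<times> nat) \<Rightarrow> 'x \<Rightarrow> (nat \<Rightarrow> real) \<Rightarrow> nat set"
  assumes alpha: "0 < \<alpha>" "\<alpha> < 1"
    and split: "Dtrain \<union> Dcal = {1..n}" "Dtrain \<inter> Dcal = {}"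
    and prediction_function_C: "\<forall>\<omega>\<in>space (PiM {1..Suc n} (\<lambda>_. P)). prediction_function K (C \<omega>)"
    and C_train: "\<forall>\<omega>\<in>space (PiM {1..Suc n} (\<lambda>_. P)). \<forall>\<omega>'\<in>space (PiM {1..Suc n} (\<lambda>_. P)).
        (\<forall>i\<in>Dtrain. fst (\<omega> i) = fst (\<omega>' i) \<and> snd (snd (\<omega> i)) = snd (snd (\<omega>' i)))
        \<longrightarrow> C \<omega> = C \<omega>'"
    and score_measurable: "\<forall>k\<in>{1..K}. (\<lambda>(\<omega>, x). score K (C \<omega>) x k)
        \<in> borel_measurable (PiM {1..Suc n} (\<lambda>_. P) \<Otimes>\<^sub>M borel)"
begin

abbreviation \<Omega> :: "(nat \<Rightarrow> 'x \<times> nat \<times> nat) measure" where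
  "\<Omega> \<equiv> PiM {1..Suc n} (\<lambda>_. P)"

definition noisy_score :: "nat \<Rightarrow> (nat \<Rightarrow> 'x \<times> nat \<times> nat) \<Rightarrow> real" where
  "noisy_score i \<omega> = score K (C \<omega>) (fst (\<omega> i)) (snd (snd (\<omega> i)))"

definition threshold :: "(nat \<Rightarrow> 'x \<times> nat \<times> nat) \<Rightarrow> real" where
  "threshold \<omega> = conf_threshold \<alpha> (image_mset (\<lambda>i. noisy_score i \<omega>) (mset_set Dcal))"

definition conformal_rank :: nat where
  "conformal_rank = nat \<lceil>(1 + real (card Dcal)) * (1 - \<alpha>)\<rceil>"

text \<open>\<open>lab\<close> selects the true (\<open>fst \<circ> snd\<close>) or the noisy (\<open>snd \<circ> snd\<close>) label of the test point.\<close>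
definition test_event :: "('x \<times> nat \<times> nat \<Rightarrow> nat) \<Rightarrow> (nat \<Rightarrow> 'x \<times> nat \<times> nat) set" where
  "test_event lab = {\<omega>\<in>space \<Omega>. score K (C \<omega>) (fst (\<omega> (Suc n))) (lab (\<omega> (Suc n))) \<le> threshold \<omega>}"

lemma Dcal_subset: "Dcal \<subseteq> {1..n}" and Dtrain_subset: "Dtrain \<subseteq> {1..n}"
  using split by auto

lemma finite_Dcal: "finite Dcal"
  using Dcal_subset by (rule finite_subset) simp

lemma prob_space_\<Omega>: "prob_space \<Omega>"
  by (intro prob_space_PiM prob_space_axioms)

lemma measurable_component [measurable]: "i \<in> {1..Suc n} \<Longrightarrow> (\<lambda>\<omega>. \<omega> i) \<in> measurable \<Omega> P"
  by (rule measurable_component_singleton)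

lemma component_in_space: "\<omega> \<in> space \<Omega> \<Longrightarrow> i \<in> {1..Suc n} \<Longrightarrow> \<omega> i \<in> space P"
  using measurable_space[OF measurable_component] by blast

lemma label_in_range:
  "\<omega> \<in> space \<Omega> \<Longrightarrow> i \<in> {1..Suc n} \<Longrightarrow> lab \<in> measurable P (count_space {1..K}) \<Longrightarrow>
   lab (\<omega> i) \<in> {1..K}"
  using measurable_space component_in_space by (metis space_count_space)

lemma C_eq_if_train_eq:
  assumes "\<omega> \<in> space \<Omega>" "\<omega>' \<in> space \<Omega>" "\<And>i. i \<in> Dtrain \<Longrightarrow> \<omega> i = \<omega>' i"
  shows "C \<omega> = C \<omega>'"
  by (rule C_train[rule_format, OF assms(1,2)]) (simp add: assms(3))

lemma borel_measurable_score_of: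
  assumes "\<omega> \<in> space \<Omega>" "k \<in> {1..K}"
  shows "(\<lambda>x. score K (C \<omega>) x k) \<in> borel_measurable borel"
  using measurable_compose[OF measurable_Pair1'[OF assms(1)] score_measurable[rule_format, OF assms(2)]]
  by simp

lemma borel_measurable_score_at:
  assumes "i \<in> {1..Suc n}" "lab \<in> measurable P (count_space {1..K})"
  shows "(\<lambda>\<omega>. score K (C \<omega>) (fst (\<omega> i)) (lab (\<omega> i))) \<in> borel_measurable \<Omega>"
proof (rule measurable_compose_countable'[where g="\<lambda>\<omega>. lab (\<omega> i)" and I="{1..K}"])
  show "(\<lambda>\<omega>. lab (\<omega> i)) \<in> measurable \<Omega> (count_space {1..K})"
    by (rule measurable_compose[OF measurable_component[OF assms(1)] assms(2)])
  fix k assume "k \<in> {1..K}"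
  have "(\<lambda>\<omega>. (\<omega>, fst (\<omega> i))) \<in> measurable \<Omega> (\<Omega> \<Otimes>\<^sub>M borel)"
    by (intro measurable_Pair measurable_ident_sets[OF refl]
        measurable_compose[OF measurable_component[OF assms(1)] measurable_feature])
  from measurable_compose[OF this score_measurable[rule_format, OF \<open>k \<in> {1..K}\<close>]]
  show "(\<lambda>\<omega>. score K (C \<omega>) (fst (\<omega> i)) k) \<in> borel_measurable \<Omega>" by simp
qed simp

lemma score_at_mem_unit_interval:
  assumes "\<omega> \<in> space \<Omega>" "i \<in> {1..Suc n}" "lab \<in> measurable P (count_space {1..K})"
  shows "score K (C \<omega>) (fst (\<omega> i)) (lab (\<omega> i)) \<in> {0..1}"
  using score_mem_unit_interval[OF prediction_function_C[rule_format, OF assms(1)]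
      label_in_range[OF assms]] .

lemma borel_measurable_noisy_score:
  assumes "i \<in> {1..Suc n}"
  shows "noisy_score i \<in> borel_measurable \<Omega>"
  unfolding noisy_score_def[abs_def]
  by (rule borel_measurable_score_at[OF assms measurable_noisy_label])

lemma threshold_mem_unit_interval:
  assumes "\<omega> \<in> space \<Omega>"
  shows "threshold \<omega> \<in> {0..1}"
proof -
  have "threshold \<omega> \<in> insert 1 ((\<lambda>i. noisy_score i \<omega>) ` Dcal)"
    using conf_threshold_mem[OF alpha(2), of "image_mset (\<lambda>i. noisy_score i \<omega>) (mset_set Dcal)"]
      finite_Dcal unfolding threshold_def by simp
  moreover have "noisy_score i \<omega> \<in> {0..1}" if "i \<in> Dcal" for i
    using Dcal_subset that unfolding noisy_score_def
    by (intro score_at_mem_unit_interval[OF assms _ measurable_noisy_label]) auto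
  ultimately show ?thesis by auto
qed

lemma le_threshold_iff:
  "v \<le> 1 \<Longrightarrow> v \<le> threshold \<omega> \<longleftrightarrow> card {l\<in>Dcal. noisy_score l \<omega> < v} < conformal_rank"
  unfolding threshold_def conformal_rank_def
  using finite_Dcal by (simp add: le_conf_threshold_iff[OF alpha(2)] filter_mset_image_mset)

lemma test_event_eq_rank_event:
  assumes "lab \<in> measurable P (count_space {1..K})"
  shows "test_event lab = {\<omega>\<in>space \<Omega>. card {l\<in>Dcal. noisy_score l \<omega>
                < score K (C \<omega>) (fst (\<omega> (Suc n))) (lab (\<omega> (Suc n)))} < conformal_rank}"
  unfolding test_event_def
proof (intro Collect_cong conj_cong refl le_threshold_iff)
  fix \<omega> assume "\<omega> \<in> space \<Omega>"
  from score_at_mem_unit_interval[OF this _ assms]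
  show "score K (C \<omega>) (fst (\<omega> (Suc n))) (lab (\<omega> (Suc n))) \<le> 1" by simp
qed

lemma test_event_in_sets:
  assumes "lab \<in> measurable P (count_space {1..K})"
  shows "test_event lab \<in> sets \<Omega>"
  unfolding test_event_eq_rank_event[OF assms]
  using Dcal_subset
  by (intro measurable_card_less[OF finite_Dcal] borel_measurable_noisy_score
        borel_measurable_score_at[OF _ assms]) auto

lemma noisy_score_transpose:
  assumes "i \<in> insert (Suc n) Dcal" "i' \<in> insert (Suc n) Dcal" "\<omega> \<in> space \<Omega>" "l \<in> {1..Suc n}"
  shows "noisy_score l (\<lambda>k\<in>{1..Suc n}. \<omega> (Transposition.transpose i i' k))
       = noisy_score (Transposition.transpose i i' l) \<omega>"
proof -
  define \<sigma> where "\<sigma> = Transposition.transpose i i'"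
  have \<sigma>: "\<sigma> k \<in> {1..Suc n}" if "k \<in> {1..Suc n}" for k
    using that assms(1,2) Dcal_subset unfolding \<sigma>_def Transposition.transpose_def by auto
  have "(\<lambda>k\<in>{1..Suc n}. \<omega> (\<sigma> k)) \<in> space \<Omega>"
    using component_in_space[OF assms(3) \<sigma>] by (auto simp: space_PiM)
  moreover have "\<sigma> k = k" if "k \<in> Dtrain" for k
  proof -
    have "k \<noteq> i" "k \<noteq> i'" using that assms(1,2) split Dtrain_subset by auto
    then show ?thesis unfolding \<sigma>_def by simp
  qed
  ultimately have "C (\<lambda>k\<in>{1..Suc n}. \<omega> (\<sigma> k)) = C \<omega>"
    using Dtrain_subset by (intro C_eq_if_train_eq[OF _ assms(3)]) auto
  then show ?thesis
    using assms(4) unfolding noisy_score_def \<sigma>_def by simp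
qed

lemma noisy_test_coverage: "1 - \<alpha> \<le> measure \<Omega> (test_event (\<lambda>z. snd (snd z)))"
proof -
  define J where "J = insert (Suc n) Dcal"
  have "Suc n \<notin> Dcal" using Dcal_subset by auto
  then have J: "J \<subseteq> {1..Suc n}" "finite J" "Suc n \<in> J" and card_J: "card J = card Dcal + 1"
    using Dcal_subset finite_Dcal unfolding J_def by auto
  have event: "test_event (\<lambda>z. snd (snd z))
      = {\<omega>\<in>space \<Omega>. card {l\<in>J. noisy_score l \<omega> < noisy_score (Suc n) \<omega>} < conformal_rank}"
  proof -
    have "{l\<in>J. noisy_score l \<omega> < noisy_score (Suc n) \<omega>} = {l\<in>Dcal. noisy_score l \<omega> < noisy_score (Suc n) \<omega>}"
      for \<omega> unfolding J_def by auto
    then show ?thesis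
      unfolding test_event_eq_rank_event[OF measurable_noisy_label] noisy_score_def by simp
  qed
  show ?thesis
  proof (cases "conformal_rank \<le> card J")
    case True
    have "real conformal_rank \<le> real (card J) * measure \<Omega> (test_event (\<lambda>z. snd (snd z)))"
      unfolding event using J True
      by (intro rank_event_measure_ge prob_space_axioms borel_measurable_noisy_score noisy_score_transpose)
         (auto simp: J_def)
    also have "real (card J) = 1 + real (card Dcal)" using card_J by simp
    finally have "(1 + real (card Dcal)) * (1 - \<alpha>)
        \<le> (1 + real (card Dcal)) * measure \<Omega> (test_event (\<lambda>z. snd (snd z)))"
      unfolding conformal_rank_def by linarith
    then show ?thesis by (simp add: mult_le_cancel_left_pos)
  next
    case False
    have "card {l\<in>J. noisy_score l \<omega> < noisy_score (Suc n) \<omega>} \<le> card J" for \<omega>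
      using J(2) by (intro card_mono) auto
    then have "card {l\<in>J. noisy_score l \<omega> < noisy_score (Suc n) \<omega>} < conformal_rank" for \<omega>
      using False by (meson le_less_trans not_le)
    then have "test_event (\<lambda>z. snd (snd z)) = space \<Omega>"
      unfolding event by auto
    then show ?thesis
      using prob_space.prob_space[OF prob_space_\<Omega>] alpha by simp
  qed
qed

lemma \<Omega>_eq_insert: "\<Omega> = PiM (insert (Suc n) {1..n}) (\<lambda>_. P)"
  by (simp add: atLeastAtMostSuc_conv)

lemma update_in_space:
  assumes "x \<in> space (PiM {1..n} (\<lambda>_. P))" "y \<in> space P"
  shows "x(Suc n := y) \<in> space \<Omega>"
proof -
  have "(\<lambda>v. x(Suc n := v)) \<in> measurable P (PiM (insert (Suc n) {1..n}) (\<lambda>_. P))"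
    using measurable_component_update[OF assms(1), of "Suc n"] by simp
  from measurable_space[OF this assms(2)] show ?thesis unfolding \<Omega>_eq_insert .
qed

lemma test_event_section:
  assumes x: "x \<in> space (PiM {1..n} (\<lambda>_. P))" and y: "y \<in> space P"
    and lab: "lab \<in> measurable P (count_space {1..K})"
  shows "{y'\<in>space P. x(Suc n := y') \<in> test_event lab}
       = {z\<in>space P. score K (C (x(Suc n := y))) (fst z) (lab z) \<le> threshold (x(Suc n := y))}"
proof -
  note in_space = update_in_space[OF x]
  have C: "C (x(Suc n := y')) = C (x(Suc n := y))" if "y' \<in> space P" for y'
    using Dtrain_subset by (intro C_eq_if_train_eq in_space that y) auto
  have "threshold (x(Suc n := y')) = threshold (x(Suc n := y))" if "y' \<in> space P" for y'
    unfolding threshold_def noisy_score_def C[OF that]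
    using Dcal_subset finite_Dcal by (intro arg_cong[where f="conf_threshold \<alpha>"] image_mset_cong) auto
  with C in_space show ?thesis
    unfolding test_event_def by auto
qed

lemma noisy_test_coverage_le_true_test_coverage:
  assumes dominance: "AE \<omega> in \<Omega>. \<forall>t. \<forall>k\<in>{1..K}. \<forall>l\<in>{1..K}. l \<noteq> k \<longrightarrow>
            class_cdf (score K (C \<omega>)) l k t \<le> class_cdf (score K (C \<omega>)) k k t"
  shows "measure \<Omega> (test_event (\<lambda>z. snd (snd z))) \<le> measure \<Omega> (test_event (\<lambda>z. fst (snd z)))"
proof -
  show ?thesis
    unfolding \<Omega>_eq_insert
  proof (rule measure_le_of_AE_sections[OF prob_space_axioms finite_atLeastAtMost])
    show "test_event (\<lambda>z. snd (snd z)) \<in> sets (PiM (insert (Suc n) {1..n}) (\<lambda>_. P))"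
      "test_event (\<lambda>z. fst (snd z)) \<in> sets (PiM (insert (Suc n) {1..n}) (\<lambda>_. P))"
      using test_event_in_sets[OF measurable_noisy_label] test_event_in_sets[OF measurable_true_label]
      unfolding \<Omega>_eq_insert by auto
    show "AE \<omega> in PiM (insert (Suc n) {1..n}) (\<lambda>_. P). \<forall>t. \<forall>k\<in>{1..K}. \<forall>l\<in>{1..K}. l \<noteq> k \<longrightarrow>
            class_cdf (score K (C \<omega>)) l k t \<le> class_cdf (score K (C \<omega>)) k k t"
      using dominance unfolding \<Omega>_eq_insert .
    fix x y assume x: "x \<in> space (PiM {1..n} (\<lambda>_. P))" and y: "y \<in> space P"
      and dom: "\<forall>t. \<forall>k\<in>{1..K}. \<forall>l\<in>{1..K}. l \<noteq> k \<longrightarrow>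
            class_cdf (score K (C (x(Suc n := y)))) l k t \<le> class_cdf (score K (C (x(Suc n := y)))) k k t"
    let ?g = "score K (C (x(Suc n := y)))" and ?t = "threshold (x(Suc n := y))"
    from update_in_space[OF x y] have "noisy_label_cdf ?g ?t \<le> true_label_cdf ?g ?t"
      using dom by (intro noisy_label_cdf_le_true_label_cdf borel_measurable_score_of) auto
    then show "emeasure P {y'\<in>space P. x(Suc n := y') \<in> test_event (\<lambda>z. snd (snd z))}
        \<le> emeasure P {y'\<in>space P. x(Suc n := y') \<in> test_event (\<lambda>z. fst (snd z))}"
      unfolding test_event_section[OF x y measurable_noisy_label]
        test_event_section[OF x y measurable_true_label] noisy_label_cdf_def true_label_cdf_def
      by (simp add: emeasure_eq_measure)
  qed simp
qed

lemma true_label_covered_eq_test_event: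
  "{\<omega>\<in>space \<Omega>. fst (snd (\<omega> (Suc n))) \<in> C \<omega> (fst (\<omega> (Suc n))) (\<lambda>_. threshold \<omega>)}
   = test_event (\<lambda>z. fst (snd z))"
  unfolding test_event_def
proof (intro Collect_cong conj_cong refl)
  fix \<omega> assume \<omega>: "\<omega> \<in> space \<Omega>"
  show "fst (snd (\<omega> (Suc n))) \<in> C \<omega> (fst (\<omega> (Suc n))) (\<lambda>_. threshold \<omega>)
      \<longleftrightarrow> score K (C \<omega>) (fst (\<omega> (Suc n))) (fst (snd (\<omega> (Suc n)))) \<le> threshold \<omega>"
    using prediction_function_C \<omega> label_in_range[OF \<omega> _ measurable_true_label]
    by (intro mem_prediction_function_const_iff threshold_mem_unit_interval) auto
qed

theorem coverage_of_noisy_calibration: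
  assumes dominance: "AE \<omega> in \<Omega>. \<forall>t. \<forall>k\<in>{1..K}. \<forall>l\<in>{1..K}. l \<noteq> k \<longrightarrow>
            class_cdf (score K (C \<omega>)) l k t \<le> class_cdf (score K (C \<omega>)) k k t"
  shows "(AE \<omega> in \<Omega>. true_label_cdf (score K (C \<omega>)) (threshold \<omega>)
                       - noisy_label_cdf (score K (C \<omega>)) (threshold \<omega>) \<ge> 0)
       \<and> measure \<Omega> {\<omega>\<in>space \<Omega>. fst (snd (\<omega> (Suc n))) \<in> C \<omega> (fst (\<omega> (Suc n))) (\<lambda>_. threshold \<omega>)}
           \<ge> 1 - \<alpha>"
proof
  show "AE \<omega> in \<Omega>. true_label_cdf (score K (C \<omega>)) (threshold \<omega>)
                     - noisy_label_cdf (score K (C \<omega>)) (threshold \<omega>) \<ge> 0"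
    using dominance
  proof (rule AE_mp, intro AE_I2 impI)
    fix \<omega> assume "\<omega> \<in> space \<Omega>" and "\<forall>t. \<forall>k\<in>{1..K}. \<forall>l\<in>{1..K}. l \<noteq> k \<longrightarrow>
            class_cdf (score K (C \<omega>)) l k t \<le> class_cdf (score K (C \<omega>)) k k t"
    then have "noisy_label_cdf (score K (C \<omega>)) (threshold \<omega>)
        \<le> true_label_cdf (score K (C \<omega>)) (threshold \<omega>)"
      by (intro noisy_label_cdf_le_true_label_cdf borel_measurable_score_of) auto
    then show "true_label_cdf (score K (C \<omega>)) (threshold \<omega>)
                 - noisy_label_cdf (score K (C \<omega>)) (threshold \<omega>) \<ge> 0" by simp
  qed
  show "measure \<Omega> {\<omega>\<in>space \<Omega>. fst (snd (\<omega> (Suc n))) \<in> C \<omega> (fst (\<omega> (Suc n))) (\<lambda>_. threshold \<omega>)}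
          \<ge> 1 - \<alpha>"
    using noisy_test_coverage noisy_test_coverage_le_true_test_coverage[OF dominance]
    unfolding true_label_covered_eq_test_event by linarith
qed

end

theorem mainTheorem15:
  fixes K n :: nat
    and P :: "((real^('d::finite)) \<times> nat \<times> nat) measure"
    and Dtrain Dcal :: "nat set"
    and \<alpha> :: real
    and C :: "(nat \<Rightarrow> (real^'d) \<times> nat \<times> nat) \<Rightarrow> real^'d \<Rightarrow> (nat \<Rightarrow> real) \<Rightarrow> nat set"
  defines "\<Omega> \<equiv> PiM {1..Suc n} (\<lambda>_. P)"
    and "\<tau>hat \<equiv> (\<lambda>\<omega>. conf_threshold \<alpha>
            (image_mset (\<lambda>i. score K (C \<omega>) (fst (\<omega> i)) (snd (snd (\<omega> i)))) (mset_set Dcal)))"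
    and "F \<equiv> (\<lambda>\<omega> t. measure P {z \<in> space P. score K (C \<omega>) (fst z) (fst (snd z)) \<le> t})"
    and "Ftil \<equiv> (\<lambda>\<omega> t. measure P {z \<in> space P. score K (C \<omega>) (fst z) (snd (snd z)) \<le> t})"
    and "Fcl \<equiv> (\<lambda>\<omega> l k t. measure P {z \<in> space P. fst (snd z) = k \<and> score K (C \<omega>) (fst z) l \<le> t}
                          / measure P {z \<in> space P. fst (snd z) = k})"
  assumes K2: "K \<ge> 2" and n2: "n \<ge> 2"
    and alpha: "0 < \<alpha>" "\<alpha> < 1"
    and P_prob: "prob_space P"
    and P_sets: "sets P = sets (borel \<Otimes>\<^sub>M count_space {1..K} \<Otimes>\<^sub>M count_space {1..K})"
    and split: "Dtrain \<union> Dcal = {1..n}" "Dtrain \<inter> Dcal = {}" "Dtrain \<noteq> {}" "Dcal \<noteq> {}"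
    and pos_Y: "\<forall>k\<in>{1..K}. measure P {z \<in> space P. fst (snd z) = k} > 0"
    and pos_Ytil: "\<forall>k\<in>{1..K}. measure P {z \<in> space P. snd (snd z) = k} > 0"
    and cond_indep: "\<forall>A\<in>sets (borel :: (real^'d) measure). \<forall>j\<in>{1..K}. \<forall>k\<in>{1..K}.
        measure P {z \<in> space P. fst z \<in> A \<and> snd (snd z) = j \<and> fst (snd z) = k}
          / measure P {z \<in> space P. fst (snd z) = k}
        = (measure P {z \<in> space P. fst z \<in> A \<and> fst (snd z) = k}
            / measure P {z \<in> space P. fst (snd z) = k})
        * (measure P {z \<in> space P. snd (snd z) = j \<and> fst (snd z) = k}
            / measure P {z \<in> space P. fst (snd z) = k})"
    and C_pred: "\<forall>\<omega>\<in>space \<Omega>. prediction_function K (C \<omega>)"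
    and C_train: "\<forall>\<omega>\<in>space \<Omega>. \<forall>\<omega>'\<in>space \<Omega>.
        (\<forall>i\<in>Dtrain. fst (\<omega> i) = fst (\<omega>' i) \<and> snd (snd (\<omega> i)) = snd (snd (\<omega>' i)))
        \<longrightarrow> C \<omega> = C \<omega>'"
    and s_meas: "\<forall>k\<in>{1..K}. (\<lambda>(\<omega>, x). score K (C \<omega>) x k) \<in> borel_measurable (\<Omega> \<Otimes>\<^sub>M borel)"
    and dominance: "AE \<omega> in \<Omega>. \<forall>t::real. \<forall>k\<in>{1..K}. \<forall>l\<in>{1..K}.
        l \<noteq> k \<longrightarrow> Fcl \<omega> l k t \<le> Fcl \<omega> k k t"
  shows "(AE \<omega> in \<Omega>. F \<omega> (\<tau>hat \<omega>) - Ftil \<omega> (\<tau>hat \<omega>) \<ge> 0)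
       \<and> measure \<Omega> {\<omega> \<in> space \<Omega>.
           fst (snd (\<omega> (Suc n))) \<in> C \<omega> (fst (\<omega> (Suc n))) (\<lambda>_. \<tau>hat \<omega>)} \<ge> 1 - \<alpha>"
proof -
  have law: "noisy_label_law K P"
    by (intro noisy_label_law.intro noisy_label_law_axioms.intro P_prob P_sets pos_Y cond_indep)
  interpret split_conformal K P n Dtrain Dcal \<alpha> C
    by (intro split_conformal.intro split_conformal_axioms.intro law alpha split(1,2)
        C_pred[unfolded \<Omega>_def] C_train[unfolded \<Omega>_def] s_meas[unfolded \<Omega>_def])
  have "\<tau>hat = threshold"
    unfolding \<tau>hat_def threshold_def noisy_score_def ..
  moreover have "F = (\<lambda>\<omega>. true_label_cdf (score K (C \<omega>)))"
    and "Ftil = (\<lambda>\<omega>. noisy_label_cdf (score K (C \<omega>)))"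
    and "Fcl = (\<lambda>\<omega>. class_cdf (score K (C \<omega>)))"
    unfolding F_def Ftil_def Fcl_def true_label_cdf_def noisy_label_cdf_def class_cdf_def
    by simp_all
  ultimately show ?thesis
    using coverage_of_noisy_calibration dominance unfolding \<Omega>_def by simp
qed

end
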